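(* Let $F$ be a once-punctured torus equipped with a point of the decorated super Teichmüller space $S\tilde T(F)$, with super semi-perimeter $h$. Let $\Omega$ be the infinite trivalent tree whose vertices are the ideal triangulations of $F$ and whose edges join triangulations related by a flip; each edge corresponds to the pair of arcs $\{a,b\}$ common to its two endpoint triangulations. For an oriented edge $\vec e$ with common arcs $a,b$ whose head is the triangulation $\{a,b,c\}$, set \[ \psi(\vec e)=\frac1h\left(\frac{c}{ab}+\frac{W_a}{2a}+\frac{W_b}{2b}\right). \] Then for any finite subtree $T$ of $\Omega$, \[ \sum_{\vec e\in\mathcal C(T)}\psi(\vec e)=1, \] where $\mathcal C(T)$ is the set of oriented edges of $\Omega$ whose head lies in $T$ and whose tail lies outside $T$.
   Context: Letters $a,b,c$ denote both ideal arcs and their super $\lambda$-lengths. $S\tilde T(F)$ is the decorated $\mathrm{OSp}(1|2)$ super Teichmüller space (Penner–Zeitlin), with values in a real Grassmann algebra: a point assigns, for each ideal triangulation of $F$ (three disjoint non-isotopic ideal arcs cutting $F$ into two ideal triangles), an even $\lambda$-length with positive body to each arc (depending only on the arc), an odd $\mu$-invariant to each triangle, and a spin structure orienting each arc. For an arc $e$, $W_e=\theta_1\theta_2$ with $\theta_1,\theta_2$ the $\mu$-invariants of the triangles adjacent to $e$ counter-clockwise and clockwise of $e$ relative to its spin orientation (independent of the triangulation). Flipping $c$ in $\{a,b,c\}$ gives $d$ with $cd=a^2+b^2+abW_c$. The super semi-perimeter is $h=\frac{a}{bc}+\frac{b}{ac}+\frac{c}{ab}+\frac{W_a}{a}+\frac{W_b}{b}+\frac{W_c}{c}$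 for any triangulation $\{a,b,c\}$, independent of the triangulation. *)

theory Defs
  imports Complex_Main
begin

text \<open>Ideal arcs on the once-punctured torus correspond to slopes in Q \<union> {\<infinity>},
  i.e. primitive integer vectors (p,q) up to sign; we normalise by q > 0, or q = 0 and p = 1.
  Two distinct arcs are disjoint iff the determinant of their vectors is +-1.
  An ideal triangulation is a set of three pairwise disjoint arcs (Farey triangle).\<close>

type_synonym arc = "int \<times> int"

definition is_arc :: "arc \<Rightarrow> bool" where
  "is_arc x \<longleftrightarrow> coprime (fst x) (snd x) \<and> (snd x > 0 \<or> (snd x = 0 \<and> fst x = 1))"

definition arcs_disjoint :: "arc \<Rightarrow> arc \<Rightarrow> bool" where
  "arcs_disjoint x y \<longleftrightarrow> \<bar>fst x * snd y - snd x * fst y\<bar> = 1"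

definition is_triangulation :: "arc set \<Rightarrow> bool" where
  "is_triangulation t \<longleftrightarrow> (\<exists>a b c. t = {a, b, c} \<and> is_arc a \<and> is_arc b \<and> is_arc c \<and>
      arcs_disjoint a b \<and> arcs_disjoint a c \<and> arcs_disjoint b c)"

definition flip_adj :: "arc set \<Rightarrow> arc set \<Rightarrow> bool" where
  "flip_adj t t' \<longleftrightarrow> is_triangulation t \<and> is_triangulation t' \<and> card (t \<inter> t') = 2"

text \<open>A finite subtree of Omega: a finite nonempty set of vertices whose induced subgraph
  is connected (Omega being a tree, this is exactly a finite subtree).\<close>
definition finite_subtree :: "arc set set \<Rightarrow> bool" where
  "finite_subtree T \<longleftrightarrow> finite T \<and> T \<noteq> {} \<and> T \<subseteq> Collect is_triangulation \<and>
     (\<forall>s\<in>T. \<forall>t\<in>T. (\<lambda>x y. x \<in> T \<and> y \<in> T \<and> flip_adj x y)\<^sup>*\<^sup>* s t)"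

definition coboundary :: "arc set set \<Rightarrow> (arc set \<times> arc set) set" where
  "coboundary T = {(u, v). flip_adj u v \<and> v \<in> T \<and> u \<notin> T}"

definition rinv :: "'a::comm_ring_1 \<Rightarrow> 'a" where
  "rinv x = (if \<exists>y. x * y = 1 then (THE y. x * y = 1) else 0)"

definition body_hom :: "('a::{real_algebra_1, comm_ring_1} \<Rightarrow> real) \<Rightarrow> bool" where
  "body_hom body \<longleftrightarrow> body 1 = 1 \<and> (\<forall>x y. body (x + y) = body x + body y) \<and>
     (\<forall>x y. body (x * y) = body x * body y) \<and> (\<forall>r x. body (r *\<^sub>R x) = r * body x) \<and>
     (\<forall>x. body x = 0 \<longrightarrow> (\<exists>n. x ^ n = 0))"

definition flip_relation :: "(arc \<Rightarrow> 'a::comm_ring_1) \<Rightarrow> (arc \<Rightarrow> 'a) \<Rightarrow> bool" where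
  "flip_relation lam W \<longleftrightarrow> (\<forall>a b c d. is_triangulation {a, b, c} \<and> is_triangulation {a, b, d} \<and> c \<noteq> d
      \<longrightarrow> lam c * lam d = lam a ^ 2 + lam b ^ 2 + lam a * lam b * W c)"

definition super_point :: "('a::{real_algebra_1, comm_ring_1} \<Rightarrow> real) \<Rightarrow> (arc \<Rightarrow> 'a) \<Rightarrow> (arc \<Rightarrow> 'a) \<Rightarrow> bool" where
  "super_point body lam W \<longleftrightarrow> body_hom body \<and> (\<forall>a. is_arc a \<longrightarrow> body (lam a) > 0) \<and>
     (\<forall>a. is_arc a \<longrightarrow> body (W a) = 0) \<and> flip_relation lam W"

definition semi_perimeter :: "(arc \<Rightarrow> 'a::comm_ring_1) \<Rightarrow> (arc \<Rightarrow> 'a) \<Rightarrow> arc set \<Rightarrow> 'a" where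
  "semi_perimeter lam W t = (\<Sum>x\<in>t. lam x * rinv (\<Prod>y\<in>t - {x}. lam y)) + (\<Sum>x\<in>t. W x * rinv (lam x))"

definition base_triangulation :: "arc set" where
  "base_triangulation = {(1, 0), (0, 1), (1, 1)}"

text \<open>h, evaluated at a fixed triangulation (it is independent of the triangulation).\<close>
definition super_semiperimeter :: "(arc \<Rightarrow> 'a::comm_ring_1) \<Rightarrow> (arc \<Rightarrow> 'a) \<Rightarrow> 'a" where
  "super_semiperimeter lam W = semi_perimeter lam W base_triangulation"

text \<open>psi of an oriented edge (u, v) with head v = {a,b,c}, where {a,b} = u \<inter> v.\<close>
definition psi :: "(arc \<Rightarrow> 'a::{real_algebra_1, comm_ring_1}) \<Rightarrow> (arc \<Rightarrow> 'a) \<Rightarrow> 'a \<Rightarrow> arc set \<times> arc set \<Rightarrow> 'a" where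
  "psi lam W h e = (let u = fst e; v = snd e; c = the_elem (v - u) in
     rinv h * (lam c * rinv (\<Prod>x\<in>u \<inter> v. lam x) + (\<Sum>x\<in>u \<inter> v. W x * rinv (2 * lam x))))"

end

theory Submission
  imports Defs
begin

text \<open>
  The weights \<open>\<psi>\<close> form a unit flow on \<open>\<Omega>\<close>. The three edges entering a triangulation
  \<open>{a, b, c}\<close> carry \<open>\<psi>\<close>-weights summing to the semi-perimeter of \<open>{a, b, c}\<close> divided by \<open>h\<close>,
  which is \<open>1\<close> because the semi-perimeter is invariant under flips. The two orientations of an
  edge carry weights summing to \<open>(c + d)/(a b h) + W\<^sub>a/(a h) + W\<^sub>b/(b h)\<close>, which is \<open>1\<close> by the flip
  relation \<open>c d = a\<^sup>2 + b\<^sup>2 + a b W\<^sub>c\<close>. Summing the vertex identities over a finite subtree \<open>T\<close> counts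
  each of its \<open>|T| - 1\<close> edges in both orientations and each coboundary edge once, so the
  coboundary carries total weight \<open>|T| - (|T| - 1) = 1\<close>.

  That \<open>\<Omega>\<close> is a tree, and that every triangulation is reached from a fixed one by flips, come
  from a descent argument: arcs are primitive vectors \<open>(p, q)\<close>, and the sum of
  \<open>p\<^sup>2 + p q + q\<^sup>2\<close> over the arcs of a triangulation changes under every flip and decreases
  under exactly one flip, except at the triangulation \<open>{(1, 0), (0, 1), (-1, 1)}\<close>.
\<close>

section \<open>Arcs and Farey triangles\<close>

definition arc_det :: "arc \<Rightarrow> arc \<Rightarrow> int" where
  "arc_det x y = fst x * snd y - snd x * fst y"

definition canon :: "int \<times> int \<Rightarrow> arc" where
  "canon v = (if snd v < 0 \<or> (snd v = 0 \<and> fst v < 0) then (- fst v, - snd v) else v)"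

definition lin_comb :: "int \<Rightarrow> arc \<Rightarrow> int \<Rightarrow> arc \<Rightarrow> arc" where
  "lin_comb r x s y = (r * fst x + s * fst y, r * snd x + s * snd y)"

definition farey_tri :: "arc \<Rightarrow> arc \<Rightarrow> arc \<Rightarrow> bool" where
  "farey_tri a b c \<longleftrightarrow> is_arc a \<and> is_arc b \<and> is_arc c \<and>
     arcs_disjoint a b \<and> arcs_disjoint a c \<and> arcs_disjoint b c"

text \<open>The arcs disjoint from two disjoint arcs \<open>a\<close>, \<open>b\<close> are exactly \<open>\<plusminus>(a + b)\<close> and
  \<open>\<plusminus>(a - b)\<close>; flipping \<open>c\<close> in \<open>{a, b, c}\<close> exchanges them.\<close>

definition flip_arc :: "arc \<Rightarrow> arc \<Rightarrow> arc \<Rightarrow> arc" where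
  "flip_arc a b c =
     (if c = canon (lin_comb 1 a 1 b) then canon (lin_comb 1 a (-1) b) else canon (lin_comb 1 a 1 b))"

lemma arcs_disjoint_iff_det: "arcs_disjoint x y \<longleftrightarrow> \<bar>arc_det x y\<bar> = 1"
  by (simp add: arcs_disjoint_def arc_det_def)

lemma arcs_disjoint_commute: "arcs_disjoint x y = arcs_disjoint y x"
  by (simp add: arcs_disjoint_def abs_minus_commute mult.commute)

lemma not_arcs_disjoint_self: "\<not> arcs_disjoint x x"
  by (simp add: arcs_disjoint_def mult.commute)

lemma canon_uminus: "canon (- p, - q) = canon (p, q)"
  by (auto simp: canon_def)

lemma canon_arc: "is_arc x \<Longrightarrow> canon x = x"
  by (auto simp: canon_def is_arc_def)

lemma canon_eq_canonD: "canon x = canon y \<Longrightarrow> x = y \<or> x = (- fst y, - snd y)"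
  by (cases x, cases y) (auto simp: canon_def split: if_splits)

lemma abs_arc_det_canon_left: "\<bar>arc_det (canon v) x\<bar> = \<bar>arc_det v x\<bar>"
  by (auto simp: canon_def arc_det_def)

lemma abs_arc_det_canon_right: "\<bar>arc_det x (canon v)\<bar> = \<bar>arc_det x v\<bar>"
  by (auto simp: canon_def arc_det_def)

lemma is_arc_canon:
  assumes "\<bar>arc_det x v\<bar> = 1"
  shows "is_arc (canon v)"
proof -
  obtain p q where v: "v = (p, q)" by (cases v)
  have cop: "coprime p q"
  proof (rule coprimeI)
    fix c assume "c dvd p" "c dvd q"
    then have "c dvd \<bar>arc_det x v\<bar>" by (simp add: v arc_det_def)
    then show "is_unit c" using assms by simp
  qed
  have "v \<noteq> (0, 0)" using assms by (auto simp: arc_det_def)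
  then show ?thesis
    using cop by (auto simp: canon_def is_arc_def v zdvd1_eq)
qed

lemma arc_disjoint_from_pair:
  assumes "is_arc z" "arcs_disjoint a b" "arcs_disjoint a z" "arcs_disjoint b z"
  shows "z = canon (lin_comb 1 a 1 b) \<or> z = canon (lin_comb 1 a (-1) b)"
proof -
  obtain p1 q1 where a: "a = (p1, q1)" by (cases a)
  obtain p2 q2 where b: "b = (p2, q2)" by (cases b)
  obtain x y where z: "z = (x, y)" by (cases z)
  define D where "D = p1 * q2 - q1 * p2"
  define u where "u = x * q2 - y * p2"
  define w where "w = p1 * y - q1 * x"
  have D: "D = 1 \<or> D = -1" using assms(2) by (auto simp: arcs_disjoint_def a b D_def)
  have u: "u = 1 \<or> u = -1" using assms(4) by (auto simp: arcs_disjoint_def z b u_def algebra_simps)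
  have w: "w = 1 \<or> w = -1" using assms(3) by (auto simp: arcs_disjoint_def a z w_def)
  \<comment> \<open>Cramer's rule for \<open>z\<close> in the basis \<open>a, b\<close>\<close>
  have "D * x = u * p1 + w * p2" "D * y = u * q1 + w * q2"
    by (simp_all add: D_def u_def w_def algebra_simps)
  then have xy: "x = D * u * p1 + D * w * p2" "y = D * u * q1 + D * w * q2"
    using D by (auto simp: algebra_simps)
  have "z = lin_comb 1 a 1 b \<or> z = (- fst (lin_comb 1 a 1 b), - snd (lin_comb 1 a 1 b)) \<or>
     z = lin_comb 1 a (-1) b \<or> z = (- fst (lin_comb 1 a (-1) b), - snd (lin_comb 1 a (-1) b))"
    using D u w xy unfolding z a b lin_comb_def by (elim disjE) simp_all
  then show ?thesis
    using canon_arc[OF assms(1)] canon_uminus prod.collapse by metis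
qed

lemma farey_tri_distinct: "farey_tri a b c \<Longrightarrow> a \<noteq> b \<and> a \<noteq> c \<and> b \<noteq> c"
  unfolding farey_tri_def by (metis not_arcs_disjoint_self)

lemma farey_tri_permute:
  "farey_tri a b c \<Longrightarrow> farey_tri b a c \<and> farey_tri a c b \<and> farey_tri c b a \<and> farey_tri b c a \<and> farey_tri c a b"
  by (auto simp: farey_tri_def arcs_disjoint_commute)

lemma is_triangulation_iff: "is_triangulation {a, b, c} \<longleftrightarrow> farey_tri a b c"
proof
  assume "is_triangulation {a, b, c}"
  then obtain x y z where xyz: "{a, b, c} = {x, y, z}" and t: "farey_tri x y z"
    unfolding is_triangulation_def farey_tri_def by blast
  then have "card {a, b, c} = 3" using farey_tri_distinct[OF t] by simp
  then have "a \<noteq> b" "a \<noteq> c" "b \<noteq> c" by (auto simp: card_insert_if split: if_splits)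
  moreover have "a \<in> {x, y, z}" "b \<in> {x, y, z}" "c \<in> {x, y, z}" using xyz by auto
  ultimately show "farey_tri a b c"
    using t by (auto simp: farey_tri_def arcs_disjoint_commute)
next
  assume "farey_tri a b c"
  then show "is_triangulation {a, b, c}"
    unfolding is_triangulation_def farey_tri_def by blast
qed

lemma is_triangulationE:
  assumes "is_triangulation t"
  obtains a b c where "t = {a, b, c}" "farey_tri a b c"
  using assms unfolding is_triangulation_def farey_tri_def by blast

lemma is_triangulation_card: "is_triangulation t \<Longrightarrow> finite t \<and> card t = 3"
  by (metis is_triangulationE farey_tri_distinct card_3_iff finite.emptyI finite_insert)

lemma flip_arc_unique:
  assumes "farey_tri a b c" "farey_tri a b w" "w \<noteq> c"
  shows "flip_arc a b c = w"
  using arc_disjoint_from_pair[of c a b] arc_disjoint_from_pair[of w a b] assms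
  by (auto simp: flip_arc_def farey_tri_def)

lemma flip_arc_commute: "flip_arc b a c = flip_arc a b c"
proof -
  have "canon (lin_comb 1 b 1 a) = canon (lin_comb 1 a 1 b)"
    by (simp add: lin_comb_def add.commute)
  moreover have "canon (lin_comb 1 b (-1) a) = canon (lin_comb 1 a (-1) b)"
    using canon_uminus[of "fst a - fst b" "snd a - snd b"] by (simp add: lin_comb_def)
  ultimately show ?thesis by (simp add: flip_arc_def)
qed

lemma canon_eq_imp_arc_det_0: "canon x = canon y \<Longrightarrow> arc_det x y = 0"
  by (auto dest: canon_eq_canonD simp: arc_det_def)

lemma farey_tri_canon:
  assumes "\<bar>arc_det x y\<bar> = 1" "\<bar>arc_det x z\<bar> = 1" "\<bar>arc_det y z\<bar> = 1"
  shows "farey_tri (canon x) (canon y) (canon z)"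
proof -
  have "\<bar>arc_det y x\<bar> = 1" using assms(1) by (simp add: arc_det_def abs_minus_commute mult.commute)
  then show ?thesis
    using assms is_arc_canon
    by (simp add: farey_tri_def arcs_disjoint_iff_det abs_arc_det_canon_left abs_arc_det_canon_right)
qed

lemma farey_tri_canonI:
  assumes t: "farey_tri a b c" and "\<bar>arc_det a v\<bar> = 1" "\<bar>arc_det b v\<bar> = 1" "arc_det c v \<noteq> 0"
  shows "farey_tri a b (canon v)" and "canon v \<noteq> c"
proof -
  have "canon a = a" "canon b = b" using t by (simp_all add: farey_tri_def canon_arc)
  moreover have "\<bar>arc_det a b\<bar> = 1" using t by (simp add: farey_tri_def arcs_disjoint_iff_det)
  ultimately show "farey_tri a b (canon v)"
    using farey_tri_canon[of a b v] assms(2,3) by simp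
  show "canon v \<noteq> c"
  proof
    assume "canon v = c"
    then have "canon v = canon c" using t by (simp add: farey_tri_def canon_arc)
    then have "arc_det v c = 0" by (rule canon_eq_imp_arc_det_0)
    then show False using assms(4) by (simp add: arc_det_def algebra_simps)
  qed
qed

lemma flip_arc_eq_canon:
  assumes "farey_tri a b c" "\<bar>arc_det a v\<bar> = 1" "\<bar>arc_det b v\<bar> = 1" "arc_det c v \<noteq> 0"
  shows "flip_arc a b c = canon v"
  using farey_tri_canonI[OF assms] by (intro flip_arc_unique[OF assms(1)])

lemma farey_tri_sum_form:
  assumes "farey_tri a b c"
  obtains s where "\<bar>s\<bar> = 1" "c = canon (lin_comb 1 a s b)"
  using arc_disjoint_from_pair[of c a b] assms that[of 1] that[of "-1"] by (auto simp: farey_tri_def)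

lemma abs_arc_det_lin_comb:
  assumes t: "farey_tri a b c" and c: "c = canon (lin_comb 1 a s b)"
  shows "\<bar>arc_det a (lin_comb r a u b)\<bar> = \<bar>u\<bar>"
    and "\<bar>arc_det b (lin_comb r a u b)\<bar> = \<bar>r\<bar>"
    and "\<bar>arc_det c (lin_comb r a u b)\<bar> = \<bar>u - s * r\<bar>"
proof -
  have D: "\<bar>arc_det a b\<bar> = 1" using t by (simp add: farey_tri_def arcs_disjoint_iff_det)
  have "arc_det a (lin_comb r a u b) = u * arc_det a b"
    and "arc_det b (lin_comb r a u b) = - r * arc_det a b"
    and "arc_det (lin_comb 1 a s b) (lin_comb r a u b) = (u - s * r) * arc_det a b"
    by (simp_all add: arc_det_def lin_comb_def algebra_simps)
  then show "\<bar>arc_det a (lin_comb r a u b)\<bar> = \<bar>u\<bar>"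
    and "\<bar>arc_det b (lin_comb r a u b)\<bar> = \<bar>r\<bar>"
    and "\<bar>arc_det c (lin_comb r a u b)\<bar> = \<bar>u - s * r\<bar>"
    using D by (simp_all add: c abs_arc_det_canon_left abs_mult)
qed

lemma flip_arc_explicit:
  assumes t: "farey_tri a b c" and s: "\<bar>s\<bar> = 1" and c: "c = canon (lin_comb 1 a s b)"
  shows "flip_arc a b c = canon (lin_comb 1 a (- s) b)"
    and "flip_arc a c b = canon (lin_comb 2 a s b)"
    and "flip_arc b c a = canon (lin_comb 1 a (2 * s) b)"
proof -
  note det = abs_arc_det_lin_comb[OF t c]
  have ss: "s * s = 1" using s by (cases "s \<ge> 0") auto
  have ct: "farey_tri a c b" "farey_tri b c a" using farey_tri_permute[OF t] by auto
  have "\<bar>arc_det c (lin_comb 1 a (- s) b)\<bar> = 2" using det(3)[of 1 "- s"] s by simp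
  then show "flip_arc a b c = canon (lin_comb 1 a (- s) b)"
    using s det(1,2) by (intro flip_arc_eq_canon[OF t]) auto
  have "\<bar>arc_det b (lin_comb 2 a s b)\<bar> = 2" using det(2)[of 2 s] by simp
  then show "flip_arc a c b = canon (lin_comb 2 a s b)"
    using s ss det(1,3) by (intro flip_arc_eq_canon[OF ct(1)]) (auto simp: algebra_simps)
  have "\<bar>arc_det a (lin_comb 1 a (2 * s) b)\<bar> = 2" using det(1)[of 1 "2 * s"] s by (simp add: abs_mult)
  then show "flip_arc b c a = canon (lin_comb 1 a (2 * s) b)"
    using s ss det(2,3) by (intro flip_arc_eq_canon[OF ct(2)]) (auto simp: algebra_simps)
qed

lemma farey_tri_flip_arc:
  assumes t: "farey_tri a b c"
  shows "farey_tri a b (flip_arc a b c)" and "flip_arc a b c \<noteq> c"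
proof -
  obtain s where s: "\<bar>s\<bar> = 1" and c: "c = canon (lin_comb 1 a s b)"
    using t by (rule farey_tri_sum_form)
  note det = abs_arc_det_lin_comb[OF t c, of 1 "- s"]
  have "arc_det c (lin_comb 1 a (- s) b) \<noteq> 0" using det(3) s by auto
  then show "farey_tri a b (flip_arc a b c)" and "flip_arc a b c \<noteq> c"
    using farey_tri_canonI[OF t] det(1,2) s unfolding flip_arc_explicit(1)[OF t s c] by auto
qed

lemma flip_arc_notin: "farey_tri a b c \<Longrightarrow> flip_arc a b c \<notin> {a, b, c}"
  using farey_tri_flip_arc[of a b c] not_arcs_disjoint_self unfolding farey_tri_def
  by (metis insert_iff singletonD)

section \<open>The descent rank\<close>

definition quad_form :: "arc \<Rightarrow> int" where
  "quad_form x = fst x ^ 2 + fst x * snd x + snd x ^ 2"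

definition root_triangulation :: "arc set" where
  "root_triangulation = {(1, 0), (0, 1), (-1, 1)}"

lemma quad_form_canon: "quad_form (canon x) = quad_form x"
  by (auto simp: canon_def quad_form_def)

lemma quad_form_nonneg: "quad_form x \<ge> 0"
proof -
  have "4 * quad_form x = (2 * fst x + snd x) ^ 2 + 3 * snd x ^ 2"
    by (simp add: quad_form_def power2_eq_square algebra_simps)
  then show ?thesis by (smt (verit) zero_le_power2)
qed

lemma quad_form_eq_1:
  assumes "is_arc x" "quad_form x = 1"
  shows "x \<in> root_triangulation"
proof -
  obtain p q where x: "x = (p, q)" by (cases x)
  have q: "q > 0 \<or> (q = 0 \<and> p = 1)" using assms(1) by (simp add: is_arc_def x)
  have e: "(2 * p + q) ^ 2 + 3 * q ^ 2 = 4" using assms(2)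
    by (simp add: quad_form_def x power2_eq_square algebra_simps)
  have "q < 2"
  proof (rule ccontr)
    assume "\<not> q < 2"
    then have "3 * q ^ 2 \<ge> 12" using power_mono[of 2 q 2] by simp
    then show False using e by (smt (verit) zero_le_power2)
  qed
  then have "q = 0 \<and> p = 1 \<or> q = 1" using q by auto
  moreover have "q = 1 \<Longrightarrow> p * (p + 1) = 0"
    using assms(2) by (simp add: quad_form_def x power2_eq_square algebra_simps)
  ultimately show ?thesis by (auto simp: x root_triangulation_def)
qed

text \<open>With \<open>c = \<plusminus>(a + s b)\<close>, the number \<open>\<beta>\<close> below is \<open>s\<close> times the polarisation of the
  quadratic form at \<open>(a, b)\<close>, and \<open>4 Q(a) Q(b) - \<beta>\<^sup>2 = 3 det(a, b)\<^sup>2 = 3\<close>.\<close>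

lemma quad_form_flips:
  assumes t: "farey_tri a b c"
  obtains \<beta> where "quad_form c = quad_form a + quad_form b + \<beta>"
    "quad_form (flip_arc a b c) = quad_form a + quad_form b - \<beta>"
    "quad_form (flip_arc a c b) = 4 * quad_form a + quad_form b + 2 * \<beta>"
    "quad_form (flip_arc b c a) = quad_form a + 4 * quad_form b + 2 * \<beta>"
    "4 * quad_form a * quad_form b = \<beta> ^ 2 + 3" "odd \<beta>"
proof -
  obtain s where s: "\<bar>s\<bar> = 1" and c: "c = canon (lin_comb 1 a s b)"
    using t by (rule farey_tri_sum_form)
  have ss: "s * (s * x) = x" for x
    using s by (cases "s \<ge> 0") auto
  have "\<bar>arc_det a b\<bar> = 1" using t by (simp add: farey_tri_def arcs_disjoint_iff_det)
  then have D: "(arc_det a b) ^ 2 = 1" using power2_abs[of "arc_det a b"] by simp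
  obtain p1 q1 p2 q2 where a: "a = (p1, q1)" and b: "b = (p2, q2)" by (cases a, cases b)
  define \<gamma> where "\<gamma> = 2 * p1 * p2 + p1 * q2 + q1 * p2 + 2 * q1 * q2"
  define \<beta> where "\<beta> = s * \<gamma>"
  have Q: "quad_form (canon (lin_comb r a u b)) = r * r * quad_form a + u * u * quad_form b
     + r * u * \<gamma>" for r u
    unfolding quad_form_canon
    by (simp add: quad_form_def lin_comb_def a b \<gamma>_def power2_eq_square algebra_simps)
  have "4 * quad_form a * quad_form b = \<gamma> ^ 2 + 3 * (arc_det a b) ^ 2"
    by (simp add: quad_form_def a b \<gamma>_def arc_det_def power2_eq_square algebra_simps)
  then have prod: "4 * quad_form a * quad_form b = \<beta> ^ 2 + 3"
    using D ss by (simp add: \<beta>_def power2_eq_square)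
  then have "\<beta> ^ 2 = 2 * (2 * quad_form a * quad_form b - 2) + 1" by simp
  then have "odd (\<beta> ^ 2)" by (metis even_plus_one_iff dvd_triv_left)
  then have "odd \<beta>" by simp
  have "quad_form c = quad_form a + quad_form b + \<beta>"
    using Q[of 1 s] ss by (simp add: c \<beta>_def)
  moreover have "quad_form (flip_arc a b c) = quad_form a + quad_form b - \<beta>"
    using Q[of 1 "- s"] ss by (simp add: flip_arc_explicit(1)[OF t s c] \<beta>_def)
  moreover have "quad_form (flip_arc a c b) = 4 * quad_form a + quad_form b + 2 * \<beta>"
    using Q[of 2 s] ss by (simp add: flip_arc_explicit(2)[OF t s c] \<beta>_def)
  moreover have "quad_form (flip_arc b c a) = quad_form a + 4 * quad_form b + 2 * \<beta>"
    using Q[of 1 "2 * s"] ss by (simp add: flip_arc_explicit(3)[OF t s c] \<beta>_def algebra_simps)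
  ultimately show thesis using that prod \<open>odd \<beta>\<close> by blast
qed

lemma quad_form_flip_neq:
  assumes "farey_tri a b c"
  shows "quad_form (flip_arc a b c) \<noteq> quad_form c"
proof -
  obtain \<beta> where "quad_form c = quad_form a + quad_form b + \<beta>"
    "quad_form (flip_arc a b c) = quad_form a + quad_form b - \<beta>" "odd \<beta>"
    using assms by (rule quad_form_flips)
  then show ?thesis by presburger
qed

lemma quad_form_flip_lower_unique:
  assumes "farey_tri a b c"
  shows "\<not> (quad_form (flip_arc a b c) < quad_form c \<and> quad_form (flip_arc a c b) < quad_form b)"
    and "\<not> (quad_form (flip_arc a b c) < quad_form c \<and> quad_form (flip_arc b c a) < quad_form a)"
    and "\<not> (quad_form (flip_arc a c b) < quad_form b \<and> quad_form (flip_arc b c a) < quad_form a)"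
proof -
  obtain \<beta> where e: "quad_form c = quad_form a + quad_form b + \<beta>"
    "quad_form (flip_arc a b c) = quad_form a + quad_form b - \<beta>"
    "quad_form (flip_arc a c b) = 4 * quad_form a + quad_form b + 2 * \<beta>"
    "quad_form (flip_arc b c a) = quad_form a + 4 * quad_form b + 2 * \<beta>"
    "4 * quad_form a * quad_form b = \<beta> ^ 2 + 3"
    using assms by (rule quad_form_flips)
  have pos: "quad_form a \<ge> 0" "quad_form b \<ge> 0" by (rule quad_form_nonneg)+
  show "\<not> (quad_form (flip_arc a b c) < quad_form c \<and> quad_form (flip_arc a c b) < quad_form b)"
    and "\<not> (quad_form (flip_arc a b c) < quad_form c \<and> quad_form (flip_arc b c a) < quad_form a)"
    using e pos by linarith+
  show "\<not> (quad_form (flip_arc a c b) < quad_form b \<and> quad_form (flip_arc b c a) < quad_form a)"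
  proof
    assume "quad_form (flip_arc a c b) < quad_form b \<and> quad_form (flip_arc b c a) < quad_form a"
    then have "2 * quad_form a < - \<beta>" "2 * quad_form b < - \<beta>" using e by linarith+
    then have "(2 * quad_form a) * (2 * quad_form b) < (- \<beta>) * (- \<beta>)"
      using pos by (intro mult_strict_mono) auto
    then show False using e(5) by (simp add: power2_eq_square)
  qed
qed

text \<open>The descent terminates only at the root: if all three flips increase the quadratic form,
  then \<open>u = -\<beta>\<close>, \<open>v = 2 Q(b) + \<beta>\<close>, \<open>w = 2 Q(a) + \<beta>\<close> are positive with \<open>u v + u w + v w = 3\<close>.\<close>

lemma quad_form_flip_all_greater:
  assumes t: "farey_tri a b c"
    and "quad_form c < quad_form (flip_arc a b c)" "quad_form b < quad_form (flip_arc a c b)"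
      "quad_form a < quad_form (flip_arc b c a)"
  shows "{a, b, c} = root_triangulation"
proof -
  obtain \<beta> where e: "quad_form c = quad_form a + quad_form b + \<beta>"
    "quad_form (flip_arc a b c) = quad_form a + quad_form b - \<beta>"
    "quad_form (flip_arc a c b) = 4 * quad_form a + quad_form b + 2 * \<beta>"
    "quad_form (flip_arc b c a) = quad_form a + 4 * quad_form b + 2 * \<beta>"
    "4 * quad_form a * quad_form b = \<beta> ^ 2 + 3"
    using t by (rule quad_form_flips)
  define u where "u = - \<beta>"
  define v where "v = 2 * quad_form b - u"
  define w where "w = 2 * quad_form a - u"
  have u: "u \<ge> 1" and v: "v \<ge> 1" and w: "w \<ge> 1"
    using assms(2-4) e unfolding u_def v_def w_def by linarith+
  have "(u + w) * (u + v) = u * u + 3"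
    using e(5) unfolding u_def v_def w_def by (simp add: power2_eq_square algebra_simps)
  then have sum3: "u * v + u * w + v * w = 3" by (simp add: algebra_simps)
  have "u * v \<ge> 1" "u * w \<ge> 1" "v * w \<ge> 1"
    using mult_mono[of 1 u 1 v] mult_mono[of 1 u 1 w] mult_mono[of 1 v 1 w] u v w by simp_all
  then have "u * v = 1" "u * w = 1" using sum3 by linarith+
  then have "u = 1" "v = 1" "w = 1" using u v w by (auto simp: zmult_eq_1_iff)
  then have "quad_form a = 1" "quad_form b = 1" "quad_form c = 1"
    using e unfolding u_def v_def w_def by linarith+
  then have "a \<in> root_triangulation" "b \<in> root_triangulation" "c \<in> root_triangulation"
    using t quad_form_eq_1 by (auto simp: farey_tri_def)
  moreover have "a \<noteq> b" "a \<noteq> c" "b \<noteq> c" using farey_tri_distinct[OF t] by auto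
  ultimately show ?thesis unfolding root_triangulation_def by auto
qed

definition tri_rank :: "arc set \<Rightarrow> int" where
  "tri_rank t = (\<Sum>x\<in>t. quad_form x)"

lemma tri_rank_nonneg: "tri_rank t \<ge> 0"
  unfolding tri_rank_def by (simp add: sum_nonneg quad_form_nonneg)

lemma tri_rank_flip:
  assumes "farey_tri a b c"
  shows "tri_rank {a, b, flip_arc a b c} = tri_rank {a, b, c} + quad_form (flip_arc a b c) - quad_form c"
  using farey_tri_distinct[OF assms] flip_arc_notin[OF assms] by (auto simp: tri_rank_def)

lemma flip_adj_sym: "flip_adj u v \<Longrightarrow> flip_adj v u"
  by (simp add: flip_adj_def Int_commute)

lemma flip_adj_flip_arc:
  assumes "farey_tri a b c"
  shows "flip_adj {a, b, flip_arc a b c} {a, b, c}"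
proof -
  have "{a, b, flip_arc a b c} \<inter> {a, b, c} = {a, b}" using flip_arc_notin[OF assms] by auto
  then show ?thesis
    using assms farey_tri_flip_arc(1)[OF assms] farey_tri_distinct[OF assms]
    by (simp add: flip_adj_def is_triangulation_iff)
qed

lemma flip_adjE:
  assumes "flip_adj u v"
  obtains a b c where "farey_tri a b c" "v = {a, b, c}" "u = {a, b, flip_arc a b c}"
proof -
  have u: "is_triangulation u" and v: "is_triangulation v" and uv: "card (u \<inter> v) = 2"
    using assms by (auto simp: flip_adj_def)
  obtain a b where ab: "u \<inter> v = {a, b}" using uv by (auto simp: card_2_iff)
  have "card (v - u) = 1" "card (u - v) = 1"
    using is_triangulation_card[OF u] is_triangulation_card[OF v] uv
    by (simp_all add: card_Diff_subset_Int Int_commute)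
  then obtain c w where c: "v - u = {c}" and w: "u - v = {w}" by (meson card_1_singletonE)
  have "v = {a, b, c}" "u = {a, b, w}" using ab c w by blast+
  moreover have "w \<noteq> c" using c w by blast
  ultimately have "farey_tri a b c" "flip_arc a b c = w"
    using u v by (auto simp: is_triangulation_iff intro: flip_arc_unique)
  then show thesis using that \<open>v = {a, b, c}\<close> \<open>u = {a, b, w}\<close> by blast
qed

lemma flip_neighbours:
  assumes t: "farey_tri a b c"
  shows "{u. flip_adj u {a, b, c}} = {{a, b, flip_arc a b c}, {a, c, flip_arc a c b}, {b, c, flip_arc b c a}}"
proof (intro equalityI subsetI)
  fix u assume "u \<in> {u. flip_adj u {a, b, c}}"
  then obtain x y z where xyz: "farey_tri x y z" "{a, b, c} = {x, y, z}" "u = {x, y, flip_arc x y z}"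
    by (auto elim: flip_adjE)
  have flip_eq: "flip_arc x y z = flip_arc p q z" if "{x, y} = {p, q}" for p q
    using that flip_arc_commute by (metis doubleton_eq_iff)
  have "x \<noteq> z" "y \<noteq> z" "a \<noteq> b" "a \<noteq> c" "b \<noteq> c"
    using farey_tri_distinct[OF xyz(1)] farey_tri_distinct[OF t] by auto
  then have xy: "{x, y} = {a, b, c} - {z}" and "z \<in> {a, b, c}" using xyz(2) by auto
  then consider "z = c" | "z = b" | "z = a" by blast
  then show "u \<in> {{a, b, flip_arc a b c}, {a, c, flip_arc a c b}, {b, c, flip_arc b c a}}"
  proof cases
    case 1
    with xy have "{x, y} = {a, b}" using \<open>a \<noteq> c\<close> \<open>b \<noteq> c\<close> by auto
    then have "u = {a, b, flip_arc a b c}" using xyz(3) flip_eq[of a b] 1 by auto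
    then show ?thesis by simp
  next
    case 2
    with xy have "{x, y} = {a, c}" using \<open>a \<noteq> b\<close> \<open>b \<noteq> c\<close> by auto
    then have "u = {a, c, flip_arc a c b}" using xyz(3) flip_eq[of a c] 2 by auto
    then show ?thesis by simp
  next
    case 3
    with xy have "{x, y} = {b, c}" using \<open>a \<noteq> b\<close> \<open>a \<noteq> c\<close> by auto
    then have "u = {b, c, flip_arc b c a}" using xyz(3) flip_eq[of b c] 3 by auto
    then show ?thesis by simp
  qed
next
  have "{a, c, b} = {a, b, c}" "{b, c, a} = {a, b, c}" by auto
  then show "u \<in> {u. flip_adj u {a, b, c}}"
    if "u \<in> {{a, b, flip_arc a b c}, {a, c, flip_arc a c b}, {b, c, flip_arc b c a}}" for u
    using that flip_adj_flip_arc[OF t] farey_tri_permute[OF t] flip_adj_flip_arc[of a c b]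
      flip_adj_flip_arc[of b c a] by auto
qed

lemma flip_adj_tri_rank_neq:
  assumes "flip_adj u v"
  shows "tri_rank u \<noteq> tri_rank v"
proof -
  obtain a b c where t: "farey_tri a b c" and "v = {a, b, c}" "u = {a, b, flip_arc a b c}"
    using assms by (rule flip_adjE)
  then show ?thesis using tri_rank_flip[OF t] quad_form_flip_neq[OF t] by simp
qed

lemma tri_rank_neighbours:
  assumes t: "farey_tri a b c"
  shows "tri_rank {a, b, flip_arc a b c} = tri_rank {a, b, c} + quad_form (flip_arc a b c) - quad_form c"
    and "tri_rank {a, c, flip_arc a c b} = tri_rank {a, b, c} + quad_form (flip_arc a c b) - quad_form b"
    and "tri_rank {b, c, flip_arc b c a} = tri_rank {a, b, c} + quad_form (flip_arc b c a) - quad_form a"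
proof -
  have "{a, c, b} = {a, b, c}" "{b, c, a} = {a, b, c}" by auto
  then show "tri_rank {a, b, flip_arc a b c} = tri_rank {a, b, c} + quad_form (flip_arc a b c) - quad_form c"
    and "tri_rank {a, c, flip_arc a c b} = tri_rank {a, b, c} + quad_form (flip_arc a c b) - quad_form b"
    and "tri_rank {b, c, flip_arc b c a} = tri_rank {a, b, c} + quad_form (flip_arc b c a) - quad_form a"
    using tri_rank_flip[OF t] tri_rank_flip[of a c b] tri_rank_flip[of b c a] farey_tri_permute[OF t]
    by simp_all
qed

lemma lower_flip_neighbour_unique:
  assumes "flip_adj u1 v" "flip_adj u2 v" "tri_rank u1 < tri_rank v" "tri_rank u2 < tri_rank v"
  shows "u1 = u2"
proof -
  have "is_triangulation v" using assms(1) by (simp add: flip_adj_def)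
  then obtain a b c where v: "v = {a, b, c}" and t: "farey_tri a b c" by (rule is_triangulationE)
  have "u1 \<in> {u. flip_adj u {a, b, c}}" "u2 \<in> {u. flip_adj u {a, b, c}}" using assms v by auto
  then show ?thesis
    using assms(3,4) tri_rank_neighbours[OF t] quad_form_flip_lower_unique[OF t]
    unfolding flip_neighbours[OF t] v by (smt (verit) insertE singletonD)
qed

lemma lower_flip_neighbour_exists:
  assumes "is_triangulation v" "v \<noteq> root_triangulation"
  obtains u where "flip_adj u v" "tri_rank u < tri_rank v"
proof -
  obtain a b c where v: "v = {a, b, c}" and t: "farey_tri a b c"
    using assms(1) by (rule is_triangulationE)
  have "quad_form (flip_arc a b c) < quad_form c \<or> quad_form (flip_arc a c b) < quad_form b \<or>
      quad_form (flip_arc b c a) < quad_form a"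
    using quad_form_flip_all_greater[OF t] assms(2) v quad_form_flip_neq[OF t]
      quad_form_flip_neq[of a c b] quad_form_flip_neq[of b c a] farey_tri_permute[OF t]
    by fastforce
  moreover have "flip_adj u v"
    if "u \<in> {{a, b, flip_arc a b c}, {a, c, flip_arc a c b}, {b, c, flip_arc b c a}}" for u
    using that unfolding v flip_neighbours[OF t, symmetric] by simp
  ultimately show thesis
    using that tri_rank_neighbours[OF t] unfolding v by (smt (verit) insertCI)
qed

lemma flip_connected_to_root:
  "is_triangulation t \<Longrightarrow> flip_adj\<^sup>*\<^sup>* t root_triangulation"
proof (induction "nat (tri_rank t)" arbitrary: t rule: less_induct)
  case less
  show ?case
  proof (cases "t = root_triangulation")
    case False
    then obtain u where u: "flip_adj u t" "tri_rank u < tri_rank t"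
      using lower_flip_neighbour_exists[OF less.prems] by blast
    then have "flip_adj\<^sup>*\<^sup>* u root_triangulation"
      using less.hyps tri_rank_nonneg[of u] by (auto simp: flip_adj_def)
    then show ?thesis using u(1) by (meson converse_rtranclp_into_rtranclp flip_adj_sym)
  qed simp
qed

section \<open>Edges of a finite connected set of vertices\<close>

definition descending_edges :: "('v \<Rightarrow> 'v \<Rightarrow> bool) \<Rightarrow> ('v \<Rightarrow> 'b::linorder) \<Rightarrow> 'v set \<Rightarrow> ('v \<times> 'v) set" where
  "descending_edges adj rk T = {(u, v). u \<in> T \<and> v \<in> T \<and> adj u v \<and> rk v < rk u}"

lemma finite_descending_edges: "finite T \<Longrightarrow> finite (descending_edges adj rk T)"
  unfolding descending_edges_def by (rule finite_subset[of _ "T \<times> T"]) auto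

lemma card_descending_edges_le:
  fixes adj :: "'v \<Rightarrow> 'v \<Rightarrow> bool" and rk :: "'v \<Rightarrow> 'b::linorder"
  assumes "finite T" "T \<noteq> {}"
    and sym: "\<And>x y. adj x y \<Longrightarrow> adj y x"
    and lower_unique: "\<And>v u1 u2. adj u1 v \<Longrightarrow> adj u2 v \<Longrightarrow> rk u1 < rk v \<Longrightarrow> rk u2 < rk v \<Longrightarrow> u1 = u2"
  shows "card (descending_edges adj rk T) \<le> card T - 1"
proof -
  define m where "m = arg_min_on rk T"
  have m: "m \<in> T" "\<And>x. x \<in> T \<Longrightarrow> rk m \<le> rk x"
    using arg_min_if_finite(1)[OF assms(1,2)] arg_min_least[OF assms(1,2)] unfolding m_def by auto
  have "inj_on fst (descending_edges adj rk T)"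
    using lower_unique[OF sym sym] by (auto simp: descending_edges_def inj_on_def)
  moreover have "fst ` descending_edges adj rk T \<subseteq> T - {m}"
    using m by (force simp: descending_edges_def)
  ultimately have "card (descending_edges adj rk T) \<le> card (T - {m})"
    using assms(1) card_mono[of "T - {m}" "fst ` descending_edges adj rk T"] by (simp add: card_image)
  then show ?thesis using m(1) assms(1) by simp
qed

lemma connected_parent_map:
  assumes "\<forall>s\<in>T. \<forall>t\<in>T. R\<^sup>*\<^sup>* s t" "r \<in> T"
  obtains g :: "'v \<Rightarrow> 'v" and d :: "'v \<Rightarrow> nat"
  where "\<And>v. v \<in> T \<Longrightarrow> v \<noteq> r \<Longrightarrow> R v (g v) \<and> d (g v) < d v"
proof -
  define d where "d v = (LEAST n. (R ^^ n) v r)" for v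
  have parent: "\<exists>w. R v w \<and> d w < d v" if "v \<in> T" "v \<noteq> r" for v
  proof -
    have "\<exists>n. (R ^^ n) v r" using assms that by (metis rtranclp_power)
    then have "(R ^^ d v) v r" unfolding d_def by (rule LeastI_ex)
    moreover have "d v \<noteq> 0" using calculation that(2) by (cases "d v") auto
    ultimately obtain k w where "d v = Suc k" "R v w" "(R ^^ k) w r"
      using not0_implies_Suc relpowp_Suc_D2 by metis
    moreover have "d w \<le> k" unfolding d_def using calculation(3) by (rule Least_le)
    ultimately show ?thesis by auto
  qed
  have "R v (SOME w. R v w \<and> d w < d v) \<and> d (SOME w. R v w \<and> d w < d v) < d v"
    if "v \<in> T" "v \<noteq> r" for v
    using parent[OF that] by (rule someI_ex)
  then show thesis by (rule that)
qed

lemma card_descending_edges_ge: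
  fixes adj :: "'v \<Rightarrow> 'v \<Rightarrow> bool" and rk :: "'v \<Rightarrow> 'b::linorder"
  assumes "finite T" "T \<noteq> {}"
    and conn: "\<forall>s\<in>T. \<forall>t\<in>T. (\<lambda>x y. x \<in> T \<and> y \<in> T \<and> adj x y)\<^sup>*\<^sup>* s t"
    and sym: "\<And>x y. adj x y \<Longrightarrow> adj y x"
    and rk_neq: "\<And>x y. adj x y \<Longrightarrow> rk x \<noteq> rk y"
  shows "card T - 1 \<le> card (descending_edges adj rk T)"
proof -
  obtain r where r: "r \<in> T" using assms(2) by blast
  obtain g and d :: "'v \<Rightarrow> nat" where g: "\<And>v. v \<in> T \<Longrightarrow> v \<noteq> r \<Longrightarrow>
      g v \<in> T \<and> adj v (g v) \<and> d (g v) < d v"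
    using connected_parent_map[OF conn r] by auto
  \<comment> \<open>the edges of a spanning tree of \<open>T\<close>, oriented downwards\<close>
  define e where "e v = (if rk (g v) < rk v then (v, g v) else (g v, v))" for v
  have "e v \<in> descending_edges adj rk T" if "v \<in> T - {r}" for v
    using g[of v] sym[of v "g v"] rk_neq[of v "g v"] that by (auto simp: e_def descending_edges_def)
  then have "e ` (T - {r}) \<subseteq> descending_edges adj rk T" by blast
  moreover have "inj_on e (T - {r})"
  proof (rule inj_onI)
    fix v v' assume v: "v \<in> T - {r}" and v': "v' \<in> T - {r}" and "e v = e v'"
    then have "v = v' \<or> (v = g v' \<and> g v = v')" unfolding e_def by (auto split: if_splits)
    then show "v = v'" using g[of v] g[of v'] v v' by auto
  qed
  ultimately have "card (T - {r}) \<le> card (descending_edges adj rk T)"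
    using finite_descending_edges[OF assms(1)] by (intro card_inj_on_le[of e])
  then show ?thesis using r assms(1) by simp
qed

lemma adjacent_pairs_eq_descending_edges:
  assumes sym: "\<And>x y. adj x y \<Longrightarrow> adj y x" and rk_neq: "\<And>x y. adj x y \<Longrightarrow> rk x \<noteq> rk y"
  shows "{(u, v). u \<in> T \<and> v \<in> T \<and> adj u v} =
    descending_edges adj rk T \<union> prod.swap ` descending_edges adj rk T"
proof (intro equalityI subsetI)
  fix e assume "e \<in> {(u, v). u \<in> T \<and> v \<in> T \<and> adj u v}"
  then obtain u v where e: "e = (u, v)" "u \<in> T" "v \<in> T" "adj u v" by auto
  show "e \<in> descending_edges adj rk T \<union> prod.swap ` descending_edges adj rk T"
  proof (cases "rk v < rk u")
    case False
    then have "(v, u) \<in> descending_edges adj rk T"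
      using e sym[OF e(4)] rk_neq[OF e(4)] by (simp add: descending_edges_def neq_iff)
    then show ?thesis using e(1) by (simp add: rev_image_eqI)
  qed (use e in \<open>simp add: descending_edges_def\<close>)
next
  fix e assume "e \<in> descending_edges adj rk T \<union> prod.swap ` descending_edges adj rk T"
  then consider "e \<in> descending_edges adj rk T" | u v where
    "(u, v) \<in> descending_edges adj rk T" "e = (v, u)" by auto
  then show "e \<in> {(u, v). u \<in> T \<and> v \<in> T \<and> adj u v}"
  proof cases
    case (2 u v)
    then show ?thesis using sym[of u v] by (simp add: descending_edges_def)
  qed (auto simp: descending_edges_def)
qed

lemma sum_in_edges:
  assumes "finite T" "\<And>v. v \<in> T \<Longrightarrow> finite {u. adj u v}"
  shows "finite {(u, v). adj u v \<and> v \<in> T}"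
    and "(\<Sum>e \<in> {(u, v). adj u v \<and> v \<in> T}. f e) = (\<Sum>v\<in>T. \<Sum>u | adj u v. f (u, v))"
proof -
  have eq: "{(u, v). adj u v \<and> v \<in> T} = prod.swap ` (SIGMA v:T. {u. adj u v})" by force
  show "finite {(u, v). adj u v \<and> v \<in> T}" unfolding eq using assms by auto
  show "(\<Sum>e \<in> {(u, v). adj u v \<and> v \<in> T}. f e) = (\<Sum>v\<in>T. \<Sum>u | adj u v. f (u, v))"
    unfolding eq using assms
    by (subst sum.reindex) (auto simp: inj_on_def sum.Sigma case_prod_unfold prod.swap_def)
qed

lemma sum_coboundary_eq_1:
  fixes adj :: "'v \<Rightarrow> 'v \<Rightarrow> bool" and rk :: "'v \<Rightarrow> 'b::linorder"
    and f :: "'v \<times> 'v \<Rightarrow> 'a::comm_ring_1"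
  assumes fin: "finite T" and ne: "T \<noteq> {}"
    and conn: "\<forall>s\<in>T. \<forall>t\<in>T. (\<lambda>x y. x \<in> T \<and> y \<in> T \<and> adj x y)\<^sup>*\<^sup>* s t"
    and sym: "\<And>x y. adj x y \<Longrightarrow> adj y x"
    and rk_neq: "\<And>x y. adj x y \<Longrightarrow> rk x \<noteq> rk y"
    and lower_unique: "\<And>v u1 u2. adj u1 v \<Longrightarrow> adj u2 v \<Longrightarrow> rk u1 < rk v \<Longrightarrow> rk u2 < rk v \<Longrightarrow> u1 = u2"
    and finite_in: "\<And>v. v \<in> T \<Longrightarrow> finite {u. adj u v}"
    and vertex_sum: "\<And>v. v \<in> T \<Longrightarrow> (\<Sum>u | adj u v. f (u, v)) = 1"
    and edge_sum: "\<And>u v. adj u v \<Longrightarrow> f (u, v) + f (v, u) = 1"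
  shows "(\<Sum>e \<in> {(u, v). adj u v \<and> v \<in> T \<and> u \<notin> T}. f e) = 1"
proof -
  define C where "C = {(u, v). adj u v \<and> v \<in> T \<and> u \<notin> T}"
  define L where "L = descending_edges adj rk T"
  have "{(u, v). u \<in> T \<and> v \<in> T \<and> adj u v} = L \<union> prod.swap ` L"
    unfolding L_def using sym rk_neq by (rule adjacent_pairs_eq_descending_edges)
  then have in_split: "{(u, v). adj u v \<and> v \<in> T} = C \<union> (L \<union> prod.swap ` L)"
    and disj: "C \<inter> (L \<union> prod.swap ` L) = {}"
    by (auto simp: C_def)
  have "of_nat (card T) = (\<Sum>v\<in>T. \<Sum>u | adj u v. f (u, v))" using vertex_sum by simp
  also have "\<dots> = (\<Sum>e \<in> {(u, v). adj u v \<and> v \<in> T}. f e)"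
    using fin finite_in by (rule sum_in_edges(2)[symmetric])
  also have "\<dots> = sum f C + sum f (L \<union> prod.swap ` L)"
    using in_split disj sum_in_edges(1)[where adj = adj, OF fin finite_in] by (simp add: sum.union_disjoint)
  finally have sum_in: "of_nat (card T) = sum f C + sum f (L \<union> prod.swap ` L)" .
  have "finite L" "L \<inter> prod.swap ` L = {}"
    using finite_descending_edges[OF fin] by (auto simp: L_def descending_edges_def)
  then have "sum f (L \<union> prod.swap ` L) = (\<Sum>e\<in>L. f e + f (prod.swap e))"
    by (simp add: sum.union_disjoint sum.reindex sum.distrib)
  also have "\<dots> = (\<Sum>e\<in>L. 1)"
    using edge_sum by (intro sum.cong) (auto simp: L_def descending_edges_def)
  finally have sum_inner: "sum f (L \<union> prod.swap ` L) = of_nat (card L)" by simp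
  have "card L = card T - 1" "card T \<ge> 1"
    using card_descending_edges_le[where adj = adj and rk = rk, OF fin ne sym lower_unique]
      card_descending_edges_ge[where adj = adj and rk = rk, OF fin ne conn sym rk_neq] fin ne
    by (simp_all add: L_def Suc_le_eq card_gt_0_iff)
  then show ?thesis using sum_in sum_inner by (simp add: C_def of_nat_diff)
qed

section \<open>Units of the even Grassmann algebra\<close>

lemma rinv_eqI:
  fixes x y :: "'a::comm_ring_1"
  assumes "x * y = 1"
  shows "rinv x = y"
proof -
  have "(THE y. x * y = 1) = y"
  proof (rule the_equality)
    fix y' assume "x * y' = 1"
    then have "y' = y' * (x * y)" using assms by simp
    also have "\<dots> = (x * y') * y" by (simp add: algebra_simps)
    finally show "y' = y" using \<open>x * y' = 1\<close> by simp
  qed (fact assms)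
  then show ?thesis using assms by (auto simp: rinv_def)
qed

lemma rinv_mult:
  fixes x y :: "'a::comm_ring_1"
  assumes "x * rinv x = 1" "y * rinv y = 1"
  shows "rinv (x * y) = rinv x * rinv y"
proof (rule rinv_eqI)
  have "x * y * (rinv x * rinv y) = (x * rinv x) * (y * rinv y)" by (simp add: algebra_simps)
  then show "x * y * (rinv x * rinv y) = 1" using assms by simp
qed

lemma two_mult_rinv_two: "(2::'a::{real_algebra_1, comm_ring_1}) * rinv 2 = 1"
proof -
  have "(2::'a) * of_real (1 / 2) = of_real (2 * (1 / 2))" by (simp only: of_real_mult of_real_numeral)
  then have "(2::'a) * of_real (1 / 2) = 1" by simp
  then show ?thesis by (simp add: rinv_eqI)
qed

lemma body_hom_diff: "body_hom body \<Longrightarrow> body (x - y) = body x - body y"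
  unfolding body_hom_def by (metis add_diff_cancel_right' diff_add_cancel eq_diff_eq)

text \<open>If \<open>body x = r \<noteq> 0\<close> then \<open>x = r (1 - n)\<close> with \<open>n\<close> nilpotent, which is inverted by a finite
  geometric series.\<close>

lemma mult_rinv_if_body_neq_0:
  fixes x :: "'a::{real_algebra_1, comm_ring_1}"
  assumes bh: "body_hom body" and nz: "body x \<noteq> 0"
  shows "x * rinv x = 1"
proof -
  define n where "n = 1 - inverse (body x) *\<^sub>R x"
  have "body n = 0"
    using bh nz unfolding n_def by (simp add: body_hom_diff[OF bh]) (simp add: body_hom_def)
  then obtain k where k: "n ^ k = 0" using bh by (auto simp: body_hom_def)
  have "1 - n ^ k = (1 - n) * (\<Sum>i<k. n ^ i)" by (rule one_diff_power_eq)
  then have "(inverse (body x) *\<^sub>R x) * (\<Sum>i<k. n ^ i) = 1" using k by (simp add: n_def)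
  then have "x * (inverse (body x) *\<^sub>R (\<Sum>i<k. n ^ i)) = 1" by (simp add: scaleR_left_commute)
  moreover from this have "rinv x = inverse (body x) *\<^sub>R (\<Sum>i<k. n ^ i)" by (rule rinv_eqI)
  ultimately show ?thesis by simp
qed

lemma body_rinv:
  assumes "body_hom body" "x * rinv x = 1"
  shows "body (rinv x) = 1 / body x"
proof -
  have "body x * body (rinv x) = body (x * rinv x)" using assms(1) by (simp add: body_hom_def)
  also have "\<dots> = 1" using assms by (simp add: body_hom_def)
  finally have "body x * body (rinv x) = 1" .
  then show ?thesis by (cases "body x = 0") (simp_all add: eq_divide_eq mult.commute)
qed

lemma flip_relation_divided:
  fixes a b c d ia ib ic w :: "'a::comm_ring_1"
  assumes "a * ia = 1" "b * ib = 1" "c * ic = 1" "c * d = a ^ 2 + b ^ 2 + a * b * w"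
  shows "d * (ia * ib) = a * (ib * ic) + b * (ia * ic) + w * ic"
proof -
  have "d * (ia * ib) = (c * ic) * d * (ia * ib)" using assms(3) by simp
  also have "\<dots> = (c * d) * (ia * ib * ic)" by (simp add: algebra_simps)
  also have "\<dots> = a * (ib * ic) * (a * ia) + b * (ia * ic) * (b * ib) + w * ic * (a * ia) * (b * ib)"
    unfolding assms(4) by (simp add: algebra_simps power2_eq_square)
  also have "\<dots> = a * (ib * ic) + b * (ia * ic) + w * ic" using assms(1,2) by simp
  finally show ?thesis .
qed

section \<open>Super \<open>\<lambda>\<close>-lengths and the weights \<open>\<psi>\<close>\<close>

lemma super_point_lam_unit:
  assumes "super_point body lam W" "is_arc x"
  shows "lam x * rinv (lam x) = 1"
proof (rule mult_rinv_if_body_neq_0)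
  show "body_hom body" "body (lam x) \<noteq> 0"
    using assms unfolding super_point_def by (blast, metis less_irrefl)
qed

lemma super_point_flip:
  assumes "super_point body lam W" "farey_tri a b c" "farey_tri a b d" "c \<noteq> d"
  shows "lam c * lam d = lam a ^ 2 + lam b ^ 2 + lam a * lam b * W c"
  using assms unfolding super_point_def flip_relation_def is_triangulation_iff by blast

lemma super_point_W_flip:
  assumes sp: "super_point body lam W" and t: "farey_tri a b c" "farey_tri a b d" "c \<noteq> d"
  shows "W d = W c"
proof -
  have "lam a * lam b * W c = lam a * lam b * W d"
    using super_point_flip[OF sp t] super_point_flip[OF sp t(2,1) t(3)[symmetric]]
    by (simp add: mult.commute)
  moreover have "lam a * rinv (lam a) = 1" "lam b * rinv (lam b) = 1"
    using super_point_lam_unit[OF sp] t by (auto simp: farey_tri_def)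
  ultimately have "(rinv (lam a) * rinv (lam b)) * (lam a * lam b) * W c =
      (rinv (lam a) * rinv (lam b)) * (lam a * lam b) * W d"
    by (simp add: mult.assoc)
  then show ?thesis using \<open>lam a * rinv (lam a) = 1\<close> \<open>lam b * rinv (lam b) = 1\<close>
    by (simp add: algebra_simps)
qed

lemma semi_perimeter_farey_tri:
  assumes sp: "super_point body lam W" and t: "farey_tri a b c"
  shows "semi_perimeter lam W {a, b, c} =
      lam a * (rinv (lam b) * rinv (lam c)) + lam b * (rinv (lam a) * rinv (lam c))
    + lam c * (rinv (lam a) * rinv (lam b)) + W a * rinv (lam a) + W b * rinv (lam b) + W c * rinv (lam c)"
proof -
  have d: "a \<noteq> b" "a \<noteq> c" "b \<noteq> c" using farey_tri_distinct[OF t] by auto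
  have u: "lam a * rinv (lam a) = 1" "lam b * rinv (lam b) = 1" "lam c * rinv (lam c) = 1"
    using super_point_lam_unit[OF sp] t by (auto simp: farey_tri_def)
  have "{a, b, c} - {a} = {b, c}" "{a, b, c} - {b} = {a, c}" "{a, b, c} - {c} = {a, b}" using d by auto
  then show ?thesis unfolding semi_perimeter_def using d
    by (simp add: rinv_mult[OF u(2,3)] rinv_mult[OF u(1,3)] rinv_mult[OF u(1,2)] algebra_simps)
qed

lemma semi_perimeter_flip:
  assumes sp: "super_point body lam W" and t: "farey_tri a b c" "farey_tri a b d" "c \<noteq> d"
  shows "semi_perimeter lam W {a, b, c} = semi_perimeter lam W {a, b, d}"
proof -
  have u: "lam a * rinv (lam a) = 1" "lam b * rinv (lam b) = 1" "lam c * rinv (lam c) = 1"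
    "lam d * rinv (lam d) = 1"
    using super_point_lam_unit[OF sp] t by (auto simp: farey_tri_def)
  have "lam d * (rinv (lam a) * rinv (lam b)) =
      lam a * (rinv (lam b) * rinv (lam c)) + lam b * (rinv (lam a) * rinv (lam c)) + W c * rinv (lam c)"
    using flip_relation_divided[OF u(1-3) super_point_flip[OF sp t]] .
  moreover have "lam c * (rinv (lam a) * rinv (lam b)) =
      lam a * (rinv (lam b) * rinv (lam d)) + lam b * (rinv (lam a) * rinv (lam d)) + W c * rinv (lam d)"
    using flip_relation_divided[OF u(1,2,4)] super_point_flip[OF sp t] by (simp add: mult.commute)
  ultimately show ?thesis
    unfolding semi_perimeter_farey_tri[OF sp t(1)] semi_perimeter_farey_tri[OF sp t(2)]
      super_point_W_flip[OF sp t]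
    by (simp add: algebra_simps)
qed

lemma semi_perimeter_flip_adj:
  assumes "super_point body lam W" "flip_adj u v"
  shows "semi_perimeter lam W u = semi_perimeter lam W v"
proof -
  obtain a b c where t: "farey_tri a b c" and "v = {a, b, c}" "u = {a, b, flip_arc a b c}"
    using assms(2) by (rule flip_adjE)
  then show ?thesis
    using semi_perimeter_flip[OF assms(1) t farey_tri_flip_arc(1)[OF t]] farey_tri_flip_arc(2)[OF t]
    by simp
qed

lemma semi_perimeter_eq_super_semiperimeter:
  assumes sp: "super_point body lam W" and "is_triangulation t"
  shows "semi_perimeter lam W t = super_semiperimeter lam W"
proof -
  have "semi_perimeter lam W s = semi_perimeter lam W root_triangulation"
    if "is_triangulation s" for s
    using flip_connected_to_root[OF that]
    by (induction rule: rtranclp_induct) (simp_all add: semi_perimeter_flip_adj[OF sp])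
  moreover have "is_triangulation base_triangulation"
    by (simp add: base_triangulation_def is_triangulation_iff farey_tri_def is_arc_def arcs_disjoint_def)
  ultimately show ?thesis using assms(2) by (simp add: super_semiperimeter_def)
qed

lemma super_semiperimeter_unit:
  assumes sp: "super_point body lam W"
  shows "super_semiperimeter lam W * rinv (super_semiperimeter lam W) = 1"
proof -
  have t: "farey_tri (1, 0) (0, 1) (1, 1)"
    by (simp add: farey_tri_def is_arc_def arcs_disjoint_def)
  have bh: "body_hom body" using sp by (simp add: super_point_def)
  have pos: "body (lam x) > 0" and W0: "body (W x) = 0" if "is_arc x" for x
    using sp that unfolding super_point_def by blast+
  have inv: "body (rinv (lam x)) = 1 / body (lam x)" if "is_arc x" for x
    using body_rinv[OF bh super_point_lam_unit[OF sp that]] .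
  have "body (super_semiperimeter lam W) =
      body (lam (1, 0)) / (body (lam (0, 1)) * body (lam (1, 1)))
    + body (lam (0, 1)) / (body (lam (1, 0)) * body (lam (1, 1)))
    + body (lam (1, 1)) / (body (lam (1, 0)) * body (lam (0, 1)))"
    using bh t unfolding super_semiperimeter_def base_triangulation_def semi_perimeter_farey_tri[OF sp t]
    by (simp add: body_hom_def farey_tri_def inv W0)
  also have "\<dots> > 0"
    using pos t unfolding farey_tri_def by (intro add_pos_pos divide_pos_pos mult_pos_pos) auto
  finally show ?thesis using mult_rinv_if_body_neq_0[OF bh] by simp
qed

lemma psi_farey_tri:
  assumes sp: "super_point body lam W" and t: "farey_tri a b c" "farey_tri a b d" "c \<noteq> d"
  shows "psi lam W h ({a, b, d}, {a, b, c}) = rinv h * (lam c * (rinv (lam a) * rinv (lam b))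
     + rinv 2 * (W a * rinv (lam a) + W b * rinv (lam b)))"
proof -
  have d: "a \<noteq> b" "a \<noteq> c" "b \<noteq> c" "a \<noteq> d" "b \<noteq> d"
    using farey_tri_distinct[OF t(1)] farey_tri_distinct[OF t(2)] by auto
  have u: "lam a * rinv (lam a) = 1" "lam b * rinv (lam b) = 1"
    using super_point_lam_unit[OF sp] t by (auto simp: farey_tri_def)
  have "{a, b, c} - {a, b, d} = {c}" "{a, b, d} \<inter> {a, b, c} = {a, b}" using d t(3) by auto
  then show ?thesis
    unfolding psi_def Let_def fst_conv snd_conv
    using d by (simp add: rinv_mult[OF u] rinv_mult[OF two_mult_rinv_two u(1)]
      rinv_mult[OF two_mult_rinv_two u(2)]) (simp add: algebra_simps)
qed

lemma psi_edge_sum: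
  assumes sp: "super_point body lam W" and "flip_adj u v"
  shows "psi lam W (super_semiperimeter lam W) (u, v) + psi lam W (super_semiperimeter lam W) (v, u) = 1"
proof -
  define h where "h = super_semiperimeter lam W"
  obtain a b c where t: "farey_tri a b c" and v: "v = {a, b, c}" and u: "u = {a, b, flip_arc a b c}"
    using assms(2) by (rule flip_adjE)
  define d where "d = flip_arc a b c"
  have td: "farey_tri a b d" "c \<noteq> d" unfolding d_def using farey_tri_flip_arc[OF t] by auto
  have units: "lam a * rinv (lam a) = 1" "lam b * rinv (lam b) = 1" "lam c * rinv (lam c) = 1"
    using super_point_lam_unit[OF sp] t by (auto simp: farey_tri_def)
  have "psi lam W h (u, v) + psi lam W h (v, u) = rinv h * (lam c * (rinv (lam a) * rinv (lam b))
      + lam d * (rinv (lam a) * rinv (lam b)) + (2 * rinv 2) * (W a * rinv (lam a) + W b * rinv (lam b)))"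
    unfolding u v d_def[symmetric] psi_farey_tri[OF sp t td] psi_farey_tri[OF sp td(1) t td(2)[symmetric]]
    by (simp add: algebra_simps)
  also have "\<dots> = rinv h * semi_perimeter lam W {a, b, c}"
    unfolding semi_perimeter_farey_tri[OF sp t] two_mult_rinv_two
      flip_relation_divided[OF units super_point_flip[OF sp t td]]
    by (simp add: algebra_simps)
  also have "\<dots> = 1"
    using semi_perimeter_eq_super_semiperimeter[OF sp] t super_semiperimeter_unit[OF sp]
    by (simp add: h_def is_triangulation_iff mult.commute)
  finally show ?thesis unfolding h_def .
qed

lemma finite_flip_neighbours: "is_triangulation v \<Longrightarrow> finite {u. flip_adj u v}"
  by (metis flip_neighbours is_triangulationE finite.emptyI finite_insert)

lemma psi_vertex_sum:
  assumes sp: "super_point body lam W" and "is_triangulation v"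
  shows "(\<Sum>u | flip_adj u v. psi lam W (super_semiperimeter lam W) (u, v)) = 1"
proof -
  define h where "h = super_semiperimeter lam W"
  obtain a b c where v: "v = {a, b, c}" and t: "farey_tri a b c"
    using assms(2) by (rule is_triangulationE)
  have ct: "farey_tri a c b" "farey_tri b c a" and vv: "{a, c, b} = v" "{b, c, a} = v"
    using farey_tri_permute[OF t] v by auto
  have flip: "farey_tri x y (flip_arc x y z)" "z \<noteq> flip_arc x y z" if "farey_tri x y z" for x y z
    using farey_tri_flip_arc[OF that] by auto
  have neighbours_distinct:
    "{a, b, flip_arc a b c} \<noteq> {a, c, flip_arc a c b}" "{a, b, flip_arc a b c} \<noteq> {b, c, flip_arc b c a}"
    "{a, c, flip_arc a c b} \<noteq> {b, c, flip_arc b c a}"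
    using flip_arc_notin[OF t] flip_arc_notin[OF ct(1)] flip_arc_notin[OF ct(2)] farey_tri_distinct[OF t]
    by (metis insert_iff singletonD)+
  have "(\<Sum>u | flip_adj u v. psi lam W h (u, v)) = psi lam W h ({a, b, flip_arc a b c}, v)
      + psi lam W h ({a, c, flip_arc a c b}, v) + psi lam W h ({b, c, flip_arc b c a}, v)"
    unfolding v flip_neighbours[OF t] using neighbours_distinct by (simp add: add.assoc)
  also have "\<dots> = rinv h * (lam a * (rinv (lam b) * rinv (lam c)) + lam b * (rinv (lam a) * rinv (lam c))
     + lam c * (rinv (lam a) * rinv (lam b))
     + (2 * rinv 2) * (W a * rinv (lam a) + W b * rinv (lam b) + W c * rinv (lam c)))"
    using psi_farey_tri[OF sp t flip(1,2)[OF t]] psi_farey_tri[OF sp ct(1) flip(1,2)[OF ct(1)]]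
      psi_farey_tri[OF sp ct(2) flip(1,2)[OF ct(2)]]
    unfolding v vv by (simp add: algebra_simps)
  also have "\<dots> = rinv h * semi_perimeter lam W v"
    unfolding v semi_perimeter_farey_tri[OF sp t] two_mult_rinv_two by (simp add: algebra_simps)
  also have "\<dots> = 1"
    using semi_perimeter_eq_super_semiperimeter[OF sp assms(2)] super_semiperimeter_unit[OF sp]
    by (simp add: h_def mult.commute)
  finally show ?thesis unfolding h_def .
qed

theorem proposition5p1:
  fixes body :: "'a::{real_algebra_1, comm_ring_1} \<Rightarrow> real"
    and lam W :: "arc \<Rightarrow> 'a"
    and T :: "arc set set"
  assumes "super_point body lam W"
    and "finite_subtree T"
  shows "(\<Sum>e\<in>coboundary T. psi lam W (super_semiperimeter lam W) e) = 1"
proof -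
  have T: "finite T" "T \<noteq> {}" "\<And>t. t \<in> T \<Longrightarrow> is_triangulation t"
    and conn: "\<forall>s\<in>T. \<forall>t\<in>T. (\<lambda>x y. x \<in> T \<and> y \<in> T \<and> flip_adj x y)\<^sup>*\<^sup>* s t"
    using assms(2) unfolding finite_subtree_def by auto
  show ?thesis
    unfolding coboundary_def
  proof (rule sum_coboundary_eq_1[where rk = tri_rank, OF T(1,2) conn])
    show "flip_adj y x" if "flip_adj x y" for x y using that by (rule flip_adj_sym)
    show "tri_rank x \<noteq> tri_rank y" if "flip_adj x y" for x y
      using that by (rule flip_adj_tri_rank_neq)
    show "u1 = u2" if "flip_adj u1 v" "flip_adj u2 v" "tri_rank u1 < tri_rank v" "tri_rank u2 < tri_rank v"
      for v u1 u2 using that by (rule lower_flip_neighbour_unique)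
    show "finite {u. flip_adj u v}" if "v \<in> T" for v
      using T(3)[OF that] by (rule finite_flip_neighbours)
    show "(\<Sum>u | flip_adj u v. psi lam W (super_semiperimeter lam W) (u, v)) = 1" if "v \<in> T" for v
      using assms(1) T(3)[OF that] by (rule psi_vertex_sum)
    show "psi lam W (super_semiperimeter lam W) (u, v) + psi lam W (super_semiperimeter lam W) (v, u) = 1"
      if "flip_adj u v" for u v
      using assms(1) that by (rule psi_edge_sum)
  qed
qed

end
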